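(* Let $T$ be a complete theory in a language $\mathcal{L}$ with monster model $\mathbb{M}$, and let $\varphi(x;y_1,\ldots,y_r)\in\mathcal{L}$ be an NIP formula. Then there exist $d'=d'(\varphi)\in\mathbb{N}$ and a finite set of $\mathcal{L}$-formulas $\Delta$ such that: for every $k\in\mathbb{N}$, every $b\in\mathbb{M}^x$ and every $\Delta$-indiscernible $k$-dimensional array $(a_{\bar i}:\bar i\in I_1\times\cdots\times I_k)$ with each $I_s$ a finite linear order, there exist $\bar j_1,\ldots,\bar j_{d'}\in I_1\times\cdots\times I_k$ such that for all $\bar i^\alpha_1,\ldots,\bar i^\alpha_r\in I_1\times\cdots\times I_k$ ($\alpha\in\{0,1\}$): if for every $1\le s\le k$, $$\operatorname{qftp}_<(i^0_{1,s},\ldots,i^0_{r,s}/j_{1,s},\ldots,j_{d',s})=\operatorname{qftp}_<(i^1_{1,s},\ldots,i^1_{r,s}/j_{1,s},\ldots,j_{d',s}),$$ then $\models\varphi(b;a_{\bar i^0_1},\ldots,a_{\bar i^0_r})\leftrightarrow\varphi(b;a_{\bar i^1_1},\ldots,a_{\bar i^1_r})$.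
   Context: A formula is NIP if every formula obtained from it by partitioning its variables into two groups is NIP. Tuples $\bar i=(i_1,\ldots,i_k)$ have coordinates written $i_s$ (so $\bar i^\alpha_t=(i^\alpha_{t,1},\ldots,i^\alpha_{t,k})$ and $\bar j_t=(j_{t,1},\ldots,j_{t,k})$); $\operatorname{qftp}_<$ is the quantifier-free type in the language of the order. An array $(a_{\bar i}:\bar i\in I_1\times\cdots\times I_k)$ is $\Delta$-indiscernible if for every $\psi(x_1,\ldots,x_m)\in\Delta$ and all $\bar i^\alpha_1,\ldots,\bar i^\alpha_m$, $\alpha\in\{0,1\}$, such that for each coordinate $s$ the tuples $(i^0_{1,s},\ldots,i^0_{m,s})$ and $(i^1_{1,s},\ldots,i^1_{m,s})$ have the same quantifier-free order type, we have $\models\psi(a_{\bar i^0_1},\ldots,a_{\bar i^0_m})\leftrightarrow\psi(a_{\bar i^1_1},\ldots,a_{\bar i^1_m})$. *)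

theory Defs
  imports Main
begin

text \<open>A language L is given by a type 'f of function symbols and a type 'p of
relation symbols (each symbol may be used with any arity). Variables are natural numbers.\<close>

datatype 'f trm = Var nat | Fun 'f "'f trm list"

datatype ('f, 'p) fm =
    FF
  | Atom 'p "'f trm list"
  | Eq "'f trm" "'f trm"
  | Neg "('f, 'p) fm"
  | Conj "('f, 'p) fm" "('f, 'p) fm"
  | Ex nat "('f, 'p) fm"

record ('a, 'f, 'p) struc =
  dom :: "'a set"
  fint :: "'f \<Rightarrow> 'a list \<Rightarrow> 'a"
  pint :: "'p \<Rightarrow> 'a list \<Rightarrow> bool"

definition is_struc :: "('a, 'f, 'p) struc \<Rightarrow> bool" where
  "is_struc M \<longleftrightarrow> dom M \<noteq> {} \<and>
     (\<forall>f as. set as \<subseteq> dom M \<longrightarrow> fint M f as \<in> dom M)"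

fun eval_trm :: "('a, 'f, 'p) struc \<Rightarrow> (nat \<Rightarrow> 'a) \<Rightarrow> 'f trm \<Rightarrow> 'a" where
  "eval_trm M v (Var n) = v n"
| "eval_trm M v (Fun f ts) = fint M f (map (eval_trm M v) ts)"

fun sat :: "('a, 'f, 'p) struc \<Rightarrow> (nat \<Rightarrow> 'a) \<Rightarrow> ('f, 'p) fm \<Rightarrow> bool" where
  "sat M v FF = False"
| "sat M v (Atom p ts) = pint M p (map (eval_trm M v) ts)"
| "sat M v (Eq s t) = (eval_trm M v s = eval_trm M v t)"
| "sat M v (Neg \<phi>) = (\<not> sat M v \<phi>)"
| "sat M v (Conj \<phi> \<psi>) = (sat M v \<phi> \<and> sat M v \<psi>)"
| "sat M v (Ex n \<phi>) = (\<exists>a\<in>dom M. sat M (v(n := a)) \<phi>)"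

fun fv_trm :: "'f trm \<Rightarrow> nat set" where
  "fv_trm (Var n) = {n}"
| "fv_trm (Fun f ts) = (\<Union>t\<in>set ts. fv_trm t)"

fun fv :: "('f, 'p) fm \<Rightarrow> nat set" where
  "fv FF = {}"
| "fv (Atom p ts) = (\<Union>t\<in>set ts. fv_trm t)"
| "fv (Eq s t) = fv_trm s \<union> fv_trm t"
| "fv (Neg \<phi>) = fv \<phi>"
| "fv (Conj \<phi> \<psi>) = fv \<phi> \<union> fv \<psi>"
| "fv (Ex n \<phi>) = fv \<phi> - {n}"

definition sentence :: "('f, 'p) fm \<Rightarrow> bool" where
  "sentence \<phi> \<longleftrightarrow> fv \<phi> = {}"

definition valuation :: "('a, 'f, 'p) struc \<Rightarrow> (nat \<Rightarrow> 'a) \<Rightarrow> bool" where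
  "valuation M v \<longleftrightarrow> (\<forall>n. v n \<in> dom M)"

definition is_model :: "('a, 'f, 'p) struc \<Rightarrow> ('f, 'p) fm set \<Rightarrow> bool" where
  "is_model M T \<longleftrightarrow> is_struc M \<and>
     (\<forall>\<sigma>\<in>T. \<forall>v. valuation M v \<longrightarrow> sat M v \<sigma>)"

text \<open>Completeness of a theory T (a set of sentences), with respect to models
living in the type 'a.\<close>
definition complete_theory :: "'a itself \<Rightarrow> ('f, 'p) fm set \<Rightarrow> bool" where
  "complete_theory TYPE('a) T \<longleftrightarrow> (\<forall>\<sigma>\<in>T. sentence \<sigma>) \<and>
     (\<forall>\<sigma>. sentence \<sigma> \<longrightarrow>
        (\<forall>N :: ('a, 'f, 'p) struc. is_model N T \<longrightarrow> (\<forall>v. valuation N v \<longrightarrow> sat N v \<sigma>)) \<or>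
        (\<forall>N :: ('a, 'f, 'p) struc. is_model N T \<longrightarrow> (\<forall>v. valuation N v \<longrightarrow> \<not> sat N v \<sigma>)))"

definition dflt :: "('a, 'f, 'p) struc \<Rightarrow> nat \<Rightarrow> 'a" where
  "dflt M = (\<lambda>_. SOME a. a \<in> dom M)"

definition inst :: "(nat \<Rightarrow> 'a) \<Rightarrow> nat list \<Rightarrow> 'a list \<Rightarrow> nat \<Rightarrow> 'a" where
  "inst v xs as n = (case map_of (zip xs as) n of Some a \<Rightarrow> a | None \<Rightarrow> v n)"

text \<open>The partitioned formula (U ; fv phi - U) is NIP in M: for some N there is
no family a_i (i<N) of assignments to the second group and b_S (S subset of {..<N})
of assignments to the first group with phi(b_S; a_i) iff i in S.\<close>
definition nip_part :: "('a, 'f, 'p) struc \<Rightarrow> ('f, 'p) fm \<Rightarrow> nat set \<Rightarrow> bool" where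
  "nip_part M \<phi> U \<longleftrightarrow> (\<exists>N::nat. \<not> (\<exists>(a :: nat \<Rightarrow> nat \<Rightarrow> 'a) (b :: nat set \<Rightarrow> nat \<Rightarrow> 'a).
      (\<forall>i. valuation M (a i)) \<and> (\<forall>S. valuation M (b S)) \<and>
      (\<forall>i<N. \<forall>S\<subseteq>{..<N}.
         sat M (\<lambda>n. if n \<in> U then b S n else a i n) \<phi> \<longleftrightarrow> i \<in> S)))"

definition nip :: "('a, 'f, 'p) struc \<Rightarrow> ('f, 'p) fm \<Rightarrow> bool" where
  "nip M \<phi> \<longleftrightarrow> (\<forall>U\<subseteq>fv \<phi>. nip_part M \<phi> U)"

definition same_qftp_over ::
  "nat \<Rightarrow> (nat \<Rightarrow> nat) \<Rightarrow> (nat \<Rightarrow> nat) \<Rightarrow> nat \<Rightarrow> (nat \<Rightarrow> nat) \<Rightarrow> bool" where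
  "same_qftp_over m u v d w \<longleftrightarrow>
     (\<forall>t<m. \<forall>t'<m. (u t < u t' \<longleftrightarrow> v t < v t') \<and> (u t = u t' \<longleftrightarrow> v t = v t')) \<and>
     (\<forall>t<m. \<forall>e<d. (u t < w e \<longleftrightarrow> v t < w e) \<and> (u t = w e \<longleftrightarrow> v t = w e) \<and>
                    (w e < u t \<longleftrightarrow> w e < v t))"

definition same_qftp :: "nat \<Rightarrow> (nat \<Rightarrow> nat) \<Rightarrow> (nat \<Rightarrow> nat) \<Rightarrow> bool" where
  "same_qftp m u v \<longleftrightarrow> same_qftp_over m u v 0 (\<lambda>_. 0)"

text \<open>Index set I_1 x ... x I_k where I_s = {0..<n!s}, k = length n.\<close>
definition idx :: "nat list \<Rightarrow> nat list set" where
  "idx n = {is. length is = length n \<and> (\<forall>s<length n. is ! s < n ! s)}"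

text \<open>A set Delta of formulas psi(z_1,...,z_m): pairs (psi, [z_1,...,z_m]) where
the z_t are tuples of distinct variables, each of length len.\<close>
definition wf_Delta :: "nat \<Rightarrow> (('f, 'p) fm \<times> nat list list) set \<Rightarrow> bool" where
  "wf_Delta len \<Delta> \<longleftrightarrow> finite \<Delta> \<and>
     (\<forall>(\<psi>, zs)\<in>\<Delta>. distinct (concat zs) \<and> (\<forall>z\<in>set zs. length z = len) \<and>
        fv \<psi> \<subseteq> (\<Union>z\<in>set zs. set z))"

definition delta_indisc ::
  "('a, 'f, 'p) struc \<Rightarrow> (('f, 'p) fm \<times> nat list list) set \<Rightarrow> nat list \<Rightarrow> (nat list \<Rightarrow> 'a list) \<Rightarrow> bool" where
  "delta_indisc M \<Delta> n a \<longleftrightarrow>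
     (\<forall>(\<psi>, zs)\<in>\<Delta>. \<forall>i0 i1 :: nat \<Rightarrow> nat list.
        (\<forall>t<length zs. i0 t \<in> idx n \<and> i1 t \<in> idx n) \<and>
        (\<forall>s<length n. same_qftp (length zs) (\<lambda>t. i0 t ! s) (\<lambda>t. i1 t ! s)) \<longrightarrow>
        (sat M (inst (dflt M) (concat zs) (concat (map (\<lambda>t. a (i0 t)) [0..<length zs]))) \<psi>
         \<longleftrightarrow> sat M (inst (dflt M) (concat zs) (concat (map (\<lambda>t. a (i1 t)) [0..<length zs]))) \<psi>))"

end

theory Submission
  imports Defs "HOL-Library.Nat_Bijection"
begin

text \<open>Fix b and the array, and call q a critical point of the s-th index order if
  moving all entries q of coordinate s to q + 1 (where none sits) can change the truth value
  of \<phi>(b; a(i 0), ..., a(i (r - 1))). Off the critical points this truth value depends only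
  on the order type over them: a descent turns one tuple of indices into another of the same
  order type by such moves, one coordinate at a time. If some coordinate had (4r + 1)N critical
  points, N of them could be chosen whose witnessing tuples avoid the other chosen points and
  their successors. Moving the witnesses of an arbitrary subset S then realises the pattern
  S of truth values without changing the order type of the concatenated witnesses, so
  indiscernibility for the formulas \<exists>x. \<And>\<tau><N. \<plusminus>\<phi>(x; z_\<tau>) shows that x shatters N
  instances of \<phi>, which NIP forbids for a suitable N. Hence d' = (4r + 1)N parameters
  listing all critical points suffice.\<close>

fun rename_trm :: "(nat \<Rightarrow> nat) \<Rightarrow> 'f trm \<Rightarrow> 'f trm" where
  "rename_trm g (Var k) = Var (g k)"
| "rename_trm g (Fun h ts) = Fun h (map (rename_trm g) ts)"

fun rename :: "(nat \<Rightarrow> nat) \<Rightarrow> ('f, 'p) fm \<Rightarrow> ('f, 'p) fm" where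
  "rename g FF = FF"
| "rename g (Atom P ts) = Atom P (map (rename_trm g) ts)"
| "rename g (Eq s t) = Eq (rename_trm g s) (rename_trm g t)"
| "rename g (Neg \<psi>) = Neg (rename g \<psi>)"
| "rename g (Conj \<psi> \<chi>) = Conj (rename g \<psi>) (rename g \<chi>)"
| "rename g (Ex k \<psi>) = Ex (g k) (rename g \<psi>)"

lemma eval_rename_trm: "eval_trm M v (rename_trm g t) = eval_trm M (v \<circ> g) t"
  by (induction t) (auto cong: map_cong)

lemma sat_rename:
  assumes "inj g"
  shows "sat M v (rename g \<psi>) = sat M (v \<circ> g) \<psi>"
proof (induction \<psi> arbitrary: v)
  case (Ex k \<psi>)
  have "(v(g k := c)) \<circ> g = (v \<circ> g)(k := c)" for c
    using assms by (auto simp: fun_eq_iff inj_eq)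
  then have "sat M (v(g k := c)) (rename g \<psi>) = sat M ((v \<circ> g)(k := c)) \<psi>" for c
    using Ex.IH by metis
  then show ?case by (simp only: sat.simps rename.simps)
qed (auto simp: eval_rename_trm comp_def)

lemma fv_trm_rename_trm: "fv_trm (rename_trm g t) = g ` fv_trm t"
  by (induction t) auto

lemma fv_rename: "fv (rename g \<psi>) \<subseteq> g ` fv \<psi>"
  by (induction \<psi>) (auto simp: fv_trm_rename_trm)

lemma eval_trm_cong: "\<forall>k\<in>fv_trm t. v k = v' k \<Longrightarrow> eval_trm M v t = eval_trm M v' t"
  by (induction t) (auto cong: map_cong)

lemma sat_cong: "\<forall>k\<in>fv \<psi>. v k = v' k \<Longrightarrow> sat M v \<psi> = sat M v' \<psi>"
proof (induction \<psi> arbitrary: v v')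
  case (Atom P ts)
  then have "map (eval_trm M v) ts = map (eval_trm M v') ts"
    by (auto intro: eval_trm_cong)
  then show ?case by (simp only: sat.simps)
next
  case (Eq s t)
  then show ?case using eval_trm_cong[of s v v' M] eval_trm_cong[of t v v' M] by auto
next
  case (Ex k \<psi>)
  have "sat M (v(k := c)) \<psi> = sat M (v'(k := c)) \<psi>" for c
    by (rule Ex.IH) (use Ex.prems in auto)
  then show ?case by simp
next
  case (Conj \<psi>1 \<psi>2)
  have "sat M v \<psi>1 = sat M v' \<psi>1" "sat M v \<psi>2 = sat M v' \<psi>2"
    by (rule Conj.IH; use Conj.prems in simp)+
  then show ?case by simp
qed auto

fun Exs :: "nat list \<Rightarrow> ('f, 'p) fm \<Rightarrow> ('f, 'p) fm" where
  "Exs [] \<psi> = \<psi>"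
| "Exs (k # ks) \<psi> = Ex k (Exs ks \<psi>)"

lemma fv_Exs: "fv (Exs ks \<psi>) = fv \<psi> - set ks"
  by (induction ks) auto

lemma sat_ExsI:
  assumes "\<forall>k\<in>set ks. v' k \<in> dom M" "\<forall>k. k \<notin> set ks \<longrightarrow> v' k = v k" "sat M v' \<psi>"
  shows "sat M v (Exs ks \<psi>)"
  using assms
proof (induction ks arbitrary: v)
  case Nil
  then have "v' = v" by auto
  then show ?case using Nil by simp
next
  case (Cons k ks)
  have "sat M (v(k := v' k)) (Exs ks \<psi>)"
    by (rule Cons.IH) (use Cons.prems in auto)
  then show ?case using Cons.prems by auto
qed

lemma sat_ExsD:
  assumes "sat M v (Exs ks \<psi>)" "valuation M v"
  shows "\<exists>v'. valuation M v' \<and> (\<forall>k. k \<notin> set ks \<longrightarrow> v' k = v k) \<and> sat M v' \<psi>"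
  using assms
proof (induction ks arbitrary: v)
  case (Cons k ks)
  then obtain c where c: "c \<in> dom M" "sat M (v(k := c)) (Exs ks \<psi>)" by auto
  have "valuation M (v(k := c))" using Cons.prems c by (auto simp: valuation_def)
  then obtain v' where "valuation M v'" "\<forall>k'. k' \<notin> set ks \<longrightarrow> v' k' = (v(k := c)) k'" "sat M v' \<psi>"
    using Cons.IH c by blast
  then show ?case by auto
qed auto

fun Conjs :: "('f, 'p) fm list \<Rightarrow> ('f, 'p) fm" where
  "Conjs [] = Neg FF"
| "Conjs (\<psi> # \<psi>s) = Conj \<psi> (Conjs \<psi>s)"

lemma sat_Conjs: "sat M v (Conjs \<psi>s) = (\<forall>\<psi>\<in>set \<psi>s. sat M v \<psi>)"
  by (induction \<psi>s) auto

lemma fv_Conjs: "fv (Conjs \<psi>s) = (\<Union>\<psi>\<in>set \<psi>s. fv \<psi>)"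
  by (induction \<psi>s) auto

lemma inst_nth:
  assumes "distinct ks" "length ks = length cs" "\<kappa> < length ks"
  shows "inst v ks cs (ks ! \<kappa>) = cs ! \<kappa>"
  using assms by (simp add: inst_def map_of_zip_nth)

lemma inst_outside:
  assumes "k \<notin> set ks"
  shows "inst v ks cs k = v k"
proof -
  have "map_of (zip ks cs) k = None"
    using assms by (auto simp: map_of_eq_None_iff dest: set_zip_leftD)
  then show ?thesis by (simp add: inst_def)
qed

lemma zip_concat:
  "list_all2 (\<lambda>z c. length z = length c) zs cs \<Longrightarrow> zip (concat zs) (concat cs) = concat (map2 zip zs cs)"
  by (induction rule: list_all2_induct) auto

lemma inst_concat_nth:
  assumes "distinct (concat zs)" "list_all2 (\<lambda>z c. length z = length c) zs cs"
    "m < length zs" "\<kappa> < length (zs ! m)"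
  shows "inst v (concat zs) (concat cs) (zs ! m ! \<kappa>) = cs ! m ! \<kappa>"
proof -
  have len: "length zs = length cs" "length (zs ! m) = length (cs ! m)"
    using assms(2,3) by (auto simp: list_all2_conv_all_nth)
  have "(zs ! m ! \<kappa>, cs ! m ! \<kappa>) \<in> set (zip (zs ! m) (cs ! m))"
    using assms(4) len by (auto simp: in_set_conv_nth intro!: exI[of _ \<kappa>])
  moreover have "map2 zip zs cs ! m \<in> set (map2 zip zs cs)"
    using assms(3) len by (intro nth_mem) simp
  then have "zip (zs ! m) (cs ! m) \<in> set (map2 zip zs cs)"
    using assms(3) len by simp
  ultimately have mem: "(zs ! m ! \<kappa>, cs ! m ! \<kappa>) \<in> set (zip (concat zs) (concat cs))"
    unfolding zip_concat[OF assms(2)] set_concat by blast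
  have "length (concat zs) = length (concat cs)"
    using assms(2) by (induction rule: list_all2_induct) auto
  then have "distinct (map fst (zip (concat zs) (concat cs)))"
    using assms(1) by simp
  then show ?thesis by (simp add: inst_def map_of_is_SomeI[OF _ mem])
qed

lemma valuation_inst:
  assumes "valuation M v" "set cs \<subseteq> dom M"
  shows "valuation M (inst v ks cs)"
  unfolding valuation_def
proof
  fix k
  show "inst v ks cs k \<in> dom M"
  proof (cases "map_of (zip ks cs) k")
    case None
    then show ?thesis using assms by (simp add: inst_def valuation_def)
  next
    case (Some c)
    then have "c \<in> set cs" by (meson map_of_SomeD set_zip_rightD)
    then show ?thesis using Some assms by (auto simp: inst_def)
  qed
qed

lemma valuation_dflt: "dom M \<noteq> {} \<Longrightarrow> valuation M (dflt M)"
  unfolding valuation_def dflt_def by (auto intro: someI_ex)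

section \<open>Separated subsets\<close>

lemma exists_low_indegree:
  fixes R :: "'a \<Rightarrow> 'a \<Rightarrow> bool"
  assumes "finite P" "P \<noteq> {}" "\<forall>p\<in>P. card {q\<in>P. R p q} \<le> k"
  shows "\<exists>q\<in>P. card {p\<in>P. R p q} \<le> k"
proof (rule ccontr)
  assume "\<not> ?thesis"
  then have big: "\<forall>q\<in>P. k < card {p\<in>P. R p q}" by auto
  have "card P * k < (\<Sum>q\<in>P. card {p\<in>P. R p q})"
    using sum_strict_mono[OF assms(1,2), of "\<lambda>_. k"] big by simp
  also have "\<dots> = (\<Sum>q\<in>P. \<Sum>p\<in>P. of_bool (R p q))"
    using assms(1) by (simp add: Int_def[symmetric] Collect_conj_eq)
  also have "\<dots> = (\<Sum>p\<in>P. \<Sum>q\<in>P. of_bool (R p q))" by (rule sum.swap)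
  also have "\<dots> = (\<Sum>p\<in>P. card {q\<in>P. R p q})"
    using assms(1) by (simp add: Int_def[symmetric] Collect_conj_eq)
  also have "\<dots> \<le> card P * k"
    using sum_mono[of P "\<lambda>p. card {q\<in>P. R p q}" "\<lambda>_. k"] assms(3) by simp
  finally show False by simp
qed

lemma card_self_or_Suc_mem_le:
  assumes "finite A"
  shows "finite {q. q \<in> A \<or> Suc q \<in> A} \<and> card {q. q \<in> A \<or> Suc q \<in> A} \<le> 2 * card A"
proof -
  have sub: "{q. q \<in> A \<or> Suc q \<in> A} \<subseteq> A \<union> (\<lambda>c. c - 1) ` A"
    by (auto intro: image_eqI[where x = "Suc _"])
  have "card (A \<union> (\<lambda>c. c - 1) ` A) \<le> 2 * card A"
    using card_Un_le[of A "(\<lambda>c. c - 1) ` A"] card_image_le[OF assms, of "\<lambda>c. c - 1"] by linarith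
  moreover have fin: "finite (A \<union> (\<lambda>c. c - 1) ` A)" using assms by simp
  ultimately show ?thesis
    using card_mono[OF fin sub] finite_subset[OF sub fin] by simp
qed

text \<open>Greedy choice: by double counting some q \<in> P has at most 2r elements p \<in> P with q or
  q + 1 in W p; keeping q and discarding these p and the at most 2r elements p with p or
  p + 1 in W q costs at most 4r + 1 elements of P.\<close>
lemma exists_separated_subset:
  fixes W :: "nat \<Rightarrow> nat set"
  assumes "finite P" "(4 * r + 1) * N \<le> card P" "\<forall>p\<in>P. finite (W p) \<and> card (W p) \<le> r"
  shows "\<exists>Q\<subseteq>P. card Q = N \<and> (\<forall>p\<in>Q. \<forall>q\<in>Q. p \<noteq> q \<longrightarrow> q \<notin> W p \<and> Suc q \<notin> W p)"
  using assms
proof (induction N arbitrary: P)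
  case 0
  then show ?case by (intro exI[of _ "{}"]) auto
next
  case (Suc N)
  define R where "R p q \<longleftrightarrow> q \<in> W p \<or> Suc q \<in> W p" for p q
  have out: "finite {q. R p q} \<and> card {q. R p q} \<le> 2 * r" if "p \<in> P" for p
    using card_self_or_Suc_mem_le[of "W p"] Suc.prems(3) that unfolding R_def by force
  have "card {q\<in>P. R p q} \<le> 2 * r" if "p \<in> P" for p
  proof -
    have "card {q\<in>P. R p q} \<le> card {q. R p q}"
      using out[OF that] by (intro card_mono) auto
    then show ?thesis using out[OF that] by linarith
  qed
  then have "\<forall>p\<in>P. card {q\<in>P. R p q} \<le> 2 * r" by blast
  moreover have "P \<noteq> {}" using Suc.prems(2) by auto
  ultimately obtain q where q: "q \<in> P" "card {p\<in>P. R p q} \<le> 2 * r"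
    using exists_low_indegree[OF Suc.prems(1)] by blast
  define X where "X = insert q ({p\<in>P. R p q} \<union> {p. R q p})"
  define P' where "P' = P - X"
  have "finite X" using out[OF q(1)] Suc.prems(1) by (simp add: X_def)
  have "card X \<le> Suc (card ({p\<in>P. R p q} \<union> {p. R q p}))"
    using \<open>finite X\<close> by (simp add: X_def card_insert_if)
  also have "\<dots> \<le> 4 * r + 1"
    using card_Un_le[of "{p\<in>P. R p q}" "{p. R q p}"] q(2) out[OF q(1)] by linarith
  finally have "card X \<le> 4 * r + 1" .
  moreover have "card P \<le> card P' + card X"
    using card_Un_le[of P' X] card_mono[of "P' \<union> X" P] Suc.prems(1) \<open>finite X\<close>
    by (auto simp: P'_def)
  ultimately have "(4 * r + 1) * N \<le> card P'"
    using Suc.prems(2) by simp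
  moreover have "finite P'" "\<forall>p\<in>P'. finite (W p) \<and> card (W p) \<le> r"
    using Suc.prems(1,3) by (auto simp: P'_def)
  ultimately obtain Q where Q: "Q \<subseteq> P'" "card Q = N"
    "\<forall>p\<in>Q. \<forall>q\<in>Q. p \<noteq> q \<longrightarrow> q \<notin> W p \<and> Suc q \<notin> W p"
    using Suc.IH by blast
  have "q \<notin> Q" "finite Q" using Q(1) \<open>finite P'\<close> finite_subset by (auto simp: P'_def X_def)
  then show ?case
    using Q q(1) by (intro exI[of _ "insert q Q"]) (auto simp: P'_def X_def R_def)
qed

section \<open>Order types\<close>

lemma same_qftp_over_sym: "same_qftp_over m u v d w \<Longrightarrow> same_qftp_over m v u d w"
  unfolding same_qftp_over_def by blast

lemma same_qftp_if_strict_mono_on_values: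
  assumes "\<forall>t<m. u' t = \<sigma> (u t)" "\<forall>t<m. \<forall>t'<m. u t < u t' \<longrightarrow> \<sigma> (u t) < \<sigma> (u t')"
  shows "same_qftp m u' u"
  unfolding same_qftp_def same_qftp_over_def
proof (intro conjI allI impI)
  fix t t' assume tt: "t < m" "t' < m"
  consider "u t < u t'" | "u t = u t'" | "u t' < u t" by linarith
  then have "(\<sigma> (u t) < \<sigma> (u t') \<longleftrightarrow> u t < u t') \<and> (\<sigma> (u t) = \<sigma> (u t') \<longleftrightarrow> u t = u t')"
  proof cases
    case 1
    then have "\<sigma> (u t) < \<sigma> (u t')" using assms(2) tt by blast
    then show ?thesis using 1 by simp
  next
    case 3
    then have "\<sigma> (u t') < \<sigma> (u t)" using assms(2) tt by blast
    then show ?thesis using 3 by simp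
  qed simp
  then show "(u' t < u' t') = (u t < u t')" "(u' t = u' t') = (u t = u t')"
    using assms(1) tt by simp_all
qed simp_all

definition bump :: "nat \<Rightarrow> nat \<Rightarrow> nat" where
  "bump q c = (if c = q then Suc q else c)"

definition nat_dist :: "nat \<Rightarrow> nat \<Rightarrow> nat" where
  "nat_dist p q = (p - q) + (q - p)"

lemma same_qftp_over_bump:
  assumes qf: "same_qftp_over m u v d w"
    and "\<forall>t<m. u t \<noteq> Suc q" and "\<forall>e<d. w e \<noteq> q \<and> w e \<noteq> Suc q"
  shows "same_qftp_over m (\<lambda>t. bump q (u t)) v d w"
  unfolding same_qftp_over_def
proof (intro conjI allI impI)
  fix t t' assume "t < m" "t' < m"
  then have "u t \<noteq> Suc q" "u t' \<noteq> Suc q" using assms(2) by auto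
  then have "bump q (u t) < bump q (u t') \<longleftrightarrow> u t < u t'"
    "bump q (u t) = bump q (u t') \<longleftrightarrow> u t = u t'"
    by (auto simp: bump_def)
  then show "bump q (u t) < bump q (u t') \<longleftrightarrow> v t < v t'"
    "bump q (u t) = bump q (u t') \<longleftrightarrow> v t = v t'"
    using qf \<open>t < m\<close> \<open>t' < m\<close> unfolding same_qftp_over_def by simp_all
next
  fix t e assume "t < m" "e < d"
  then have "w e \<noteq> q" "w e \<noteq> Suc q" using assms(3) by auto
  then have "bump q (u t) < w e \<longleftrightarrow> u t < w e" "bump q (u t) = w e \<longleftrightarrow> u t = w e"
    "w e < bump q (u t) \<longleftrightarrow> w e < u t"
    by (auto simp: bump_def)
  then show "bump q (u t) < w e \<longleftrightarrow> v t < w e" "bump q (u t) = w e \<longleftrightarrow> v t = w e"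
    "w e < bump q (u t) \<longleftrightarrow> w e < v t"
    using qf \<open>t < m\<close> \<open>e < d\<close> unfolding same_qftp_over_def by simp_all
qed

lemma sum_nat_dist_bump_less:
  fixes u v :: "nat \<Rightarrow> nat"
  assumes "t0 < m" "u t0 = q" "q < v t0" and "\<forall>t<m. u t = q \<longrightarrow> q < v t"
  shows "(\<Sum>t<m. nat_dist (bump q (u t)) (v t)) < (\<Sum>t<m. nat_dist (u t) (v t))"
proof (rule sum_strict_mono_ex1)
  show "\<forall>t\<in>{..<m}. nat_dist (bump q (u t)) (v t) \<le> nat_dist (u t) (v t)"
    using assms(4) by (auto simp: bump_def nat_dist_def)
  have "nat_dist (bump q (u t0)) (v t0) < nat_dist (u t0) (v t0)"
    using assms(2,3) by (simp add: bump_def nat_dist_def)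
  then show "\<exists>t\<in>{..<m}. nat_dist (bump q (u t)) (v t) < nat_dist (u t) (v t)"
    using assms(1) by blast
qed simp

text \<open>Bumping the largest q = u t with u t < v t moves u towards v: no u-value equals
  q + 1 (it would have to be below its v-value as well), and neither q nor q + 1 is a
  parameter, since u and v lie on the same side of every parameter.\<close>
lemma obtain_bump_point:
  assumes qf: "same_qftp_over m u v d w" and ex: "\<exists>t<m. u t < v t"
  obtains q t0 where "t0 < m" "u t0 = q" "q < v t0" "\<forall>t<m. u t \<noteq> Suc q"
    "\<forall>e<d. w e \<noteq> q \<and> w e \<noteq> Suc q"
    "(\<Sum>t<m. nat_dist (bump q (u t)) (v t)) < (\<Sum>t<m. nat_dist (u t) (v t))"
proof -
  have ord: "\<forall>t<m. \<forall>t'<m. (u t < u t' \<longleftrightarrow> v t < v t') \<and> (u t = u t' \<longleftrightarrow> v t = v t')"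
    and par: "\<forall>t<m. \<forall>e<d. (u t < w e \<longleftrightarrow> v t < w e) \<and> (u t = w e \<longleftrightarrow> v t = w e)"
    using qf unfolding same_qftp_over_def by auto
  define A where "A = {u t | t. t < m \<and> u t < v t}"
  define q where "q = Max A"
  have "finite A" "A \<noteq> {}" using ex by (auto simp: A_def)
  then have "q \<in> A" unfolding q_def by (rule Max_in)
  then obtain t0 where t0: "t0 < m" "u t0 = q" "q < v t0" by (auto simp: A_def)
  have max: "u t \<le> q" if "t < m" "u t < v t" for t
    unfolding q_def using \<open>finite A\<close> that by (auto simp: A_def intro!: Max_ge)
  have above: "\<forall>t<m. u t = q \<longrightarrow> q < v t"
  proof (intro allI impI)
    fix t assume "t < m" "u t = q"
    moreover have "u t = u t0 \<longleftrightarrow> v t = v t0" using ord \<open>t < m\<close> t0(1) by blast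
    ultimately show "q < v t" using t0(2,3) by simp
  qed
  have no_Suc: "\<forall>t<m. u t \<noteq> Suc q"
  proof (intro allI impI notI)
    fix t assume t: "t < m" "u t = Suc q"
    then have "u t0 < u t" using t0 by simp
    then have "v t0 < v t" using ord t0(1) t(1) by blast
    then have "u t < v t" using t0 t(2) by simp
    then show False using max[OF t(1)] t(2) by simp
  qed
  have no_par: "\<forall>e<d. w e \<noteq> q \<and> w e \<noteq> Suc q"
  proof (intro allI impI conjI notI)
    fix e assume "e < d"
    then have "u t0 = w e \<longleftrightarrow> v t0 = w e" "u t0 < w e \<longleftrightarrow> v t0 < w e"
      using par t0(1) by blast+
    show False if "w e = q" using \<open>u t0 = w e \<longleftrightarrow> v t0 = w e\<close> that t0 by simp
    show False if "w e = Suc q" using \<open>u t0 < w e \<longleftrightarrow> v t0 < w e\<close> that t0 by simp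
  qed
  show ?thesis
    using that[OF t0 no_Suc no_par] sum_nat_dist_bump_less[OF t0 above] by blast
qed

section \<open>Critical points of a property of index tuples\<close>

definition shift_up :: "nat \<Rightarrow> nat \<Rightarrow> (nat \<Rightarrow> nat list) \<Rightarrow> nat \<Rightarrow> nat list" where
  "shift_up s q i = (\<lambda>t. (i t)[s := bump q (i t ! s)])"

lemma shift_up_nth:
  assumes "s < length (i t)"
  shows "shift_up s q i t ! s = bump q (i t ! s)" and "s' \<noteq> s \<Longrightarrow> shift_up s q i t ! s' = i t ! s'"
  using assms by (simp_all add: shift_up_def)

locale index_tuple_property =
  fixes n :: "nat list" and r :: nat and P :: "(nat \<Rightarrow> nat list) \<Rightarrow> bool"
  assumes P_cong: "\<forall>t<r. i t = i' t \<Longrightarrow> P i = P i'"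
begin

definition admissible :: "(nat \<Rightarrow> nat list) \<Rightarrow> bool" where
  "admissible i \<longleftrightarrow> (\<forall>t<r. i t \<in> idx n)"

definition equal_off :: "nat \<Rightarrow> (nat \<Rightarrow> nat list) \<Rightarrow> (nat \<Rightarrow> nat list) \<Rightarrow> bool" where
  "equal_off s i i' \<longleftrightarrow> (\<forall>t<r. \<forall>s'<length n. s' \<noteq> s \<longrightarrow> i t ! s' = i' t ! s')"

definition shift_invariant :: "nat \<Rightarrow> nat \<Rightarrow> bool" where
  "shift_invariant s q \<longleftrightarrow>
     (\<forall>i. admissible i \<and> (\<forall>t<r. i t ! s \<noteq> Suc q) \<longrightarrow> P (shift_up s q i) = P i)"

definition critical :: "nat \<Rightarrow> nat set" where
  "critical s = {q. Suc q < n ! s \<and> \<not> shift_invariant s q}"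

lemma admissible_length: "admissible i \<Longrightarrow> t < r \<Longrightarrow> length (i t) = length n"
  by (simp add: admissible_def idx_def)

lemma admissible_shift_up:
  assumes "admissible i" "s < length n" "Suc q < n ! s"
  shows "admissible (shift_up s q i)"
  using assms unfolding admissible_def idx_def shift_up_def bump_def by (auto simp: nth_list_update)

lemma critical_subset: "critical s \<subseteq> {..<n ! s}"
  by (auto simp: critical_def)

lemma finite_critical: "finite (critical s)"
  using critical_subset by (rule finite_subset) simp

lemma exists_closer_tuple:
  assumes s: "s < length n" and crit: "critical s \<subseteq> w ` {..<d}"
    and adm: "admissible i0" "admissible i1" and off: "equal_off s i0 i1"
    and qf: "same_qftp_over r (\<lambda>t. i0 t ! s) (\<lambda>t. i1 t ! s) d w"
    and ex: "\<exists>t<r. i0 t ! s < i1 t ! s"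
  obtains i0' where "admissible i0'" "P i0' = P i0" "equal_off s i0' i1"
    "same_qftp_over r (\<lambda>t. i0' t ! s) (\<lambda>t. i1 t ! s) d w"
    "(\<Sum>t<r. nat_dist (i0' t ! s) (i1 t ! s)) < (\<Sum>t<r. nat_dist (i0 t ! s) (i1 t ! s))"
proof -
  obtain q t0 where t0: "t0 < r" "i0 t0 ! s = q" "q < i1 t0 ! s"
    and no_Suc: "\<forall>t<r. i0 t ! s \<noteq> Suc q" and no_par: "\<forall>e<d. w e \<noteq> q \<and> w e \<noteq> Suc q"
    and closer: "(\<Sum>t<r. nat_dist (bump q (i0 t ! s)) (i1 t ! s)) < (\<Sum>t<r. nat_dist (i0 t ! s) (i1 t ! s))"
    by (rule obtain_bump_point[OF qf ex])
  have "i1 t0 ! s < n ! s" using adm(2) t0(1) s by (auto simp: admissible_def idx_def)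
  then have q_lt: "Suc q < n ! s" using t0 by simp
  have "q \<notin> critical s" using crit no_par by blast
  then have "shift_invariant s q" using q_lt by (simp add: critical_def)
  then have same_P: "P (shift_up s q i0) = P i0"
    using adm(1) no_Suc by (simp add: shift_invariant_def)
  have coord: "shift_up s q i0 t ! s = bump q (i0 t ! s)" if "t < r" for t
    using shift_up_nth(1) adm(1) s that by (simp add: admissible_length)
  show ?thesis
  proof (rule that)
    show "admissible (shift_up s q i0)" by (rule admissible_shift_up[OF adm(1) s q_lt])
    show "P (shift_up s q i0) = P i0" by (rule same_P)
    show "equal_off s (shift_up s q i0) i1"
      using off adm(1) s by (simp add: equal_off_def shift_up_nth(2) admissible_length)
    have "same_qftp_over r (\<lambda>t. bump q (i0 t ! s)) (\<lambda>t. i1 t ! s) d w"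
      by (rule same_qftp_over_bump[OF qf no_Suc no_par])
    then show "same_qftp_over r (\<lambda>t. shift_up s q i0 t ! s) (\<lambda>t. i1 t ! s) d w"
      by (simp add: same_qftp_over_def coord)
    show "(\<Sum>t<r. nat_dist (shift_up s q i0 t ! s) (i1 t ! s)) < (\<Sum>t<r. nat_dist (i0 t ! s) (i1 t ! s))"
      using closer by (simp add: coord)
  qed
qed

lemma P_eq_if_equal_coord:
  assumes "admissible i0" "admissible i1" "equal_off s i0 i1" "\<forall>t<r. i0 t ! s = i1 t ! s"
  shows "P i0 = P i1"
proof (rule P_cong, intro allI impI)
  fix t assume t: "t < r"
  show "i0 t = i1 t"
  proof (rule nth_equalityI)
    show "length (i0 t) = length (i1 t)" using assms(1,2) t by (simp add: admissible_length)
    fix s' assume "s' < length (i0 t)"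
    then have "s' < length n" using assms(1) t by (simp add: admissible_length)
    then show "i0 t ! s' = i1 t ! s'"
      using assms(3,4) t by (cases "s' = s") (auto simp: equal_off_def)
  qed
qed

lemma P_eq_if_same_qftp_coord:
  assumes s: "s < length n" and crit: "critical s \<subseteq> w ` {..<d}"
    and "admissible i0" "admissible i1" "equal_off s i0 i1"
    and "same_qftp_over r (\<lambda>t. i0 t ! s) (\<lambda>t. i1 t ! s) d w"
  shows "P i0 = P i1"
  using assms(3-)
proof (induction "\<Sum>t<r. nat_dist (i0 t ! s) (i1 t ! s)" arbitrary: i0 i1 rule: less_induct)
  case less
  have "(\<exists>t<r. i0 t ! s < i1 t ! s) \<or> (\<exists>t<r. i1 t ! s < i0 t ! s) \<or> (\<forall>t<r. i0 t ! s = i1 t ! s)"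
    using linorder_neq_iff by blast
  then consider (below) "\<exists>t<r. i0 t ! s < i1 t ! s" | (above) "\<exists>t<r. i1 t ! s < i0 t ! s"
    | (equal) "\<forall>t<r. i0 t ! s = i1 t ! s" by blast
  then show ?case
  proof cases
    case below
    obtain i0' where i0': "admissible i0'" "P i0' = P i0" "equal_off s i0' i1"
      "same_qftp_over r (\<lambda>t. i0' t ! s) (\<lambda>t. i1 t ! s) d w"
      "(\<Sum>t<r. nat_dist (i0' t ! s) (i1 t ! s)) < (\<Sum>t<r. nat_dist (i0 t ! s) (i1 t ! s))"
      using exists_closer_tuple[OF s crit less.prems below] .
    have "P i0' = P i1" by (rule less.hyps[OF i0'(5) i0'(1) less.prems(2) i0'(3,4)])
    then show ?thesis using i0'(2) by simp
  next
    case above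
    have "equal_off s i1 i0" using less.prems(3) by (auto simp: equal_off_def)
    obtain i1' where i1': "admissible i1'" "P i1' = P i1" "equal_off s i1' i0"
      "same_qftp_over r (\<lambda>t. i1' t ! s) (\<lambda>t. i0 t ! s) d w"
      "(\<Sum>t<r. nat_dist (i1' t ! s) (i0 t ! s)) < (\<Sum>t<r. nat_dist (i1 t ! s) (i0 t ! s))"
      using exists_closer_tuple[OF s crit less.prems(2,1) \<open>equal_off s i1 i0\<close>
          same_qftp_over_sym[OF less.prems(4)] above] .
    have "nat_dist p p' = nat_dist p' p" for p p' by (simp add: nat_dist_def)
    then have "(\<Sum>t<r. nat_dist (i0 t ! s) (i1' t ! s)) < (\<Sum>t<r. nat_dist (i0 t ! s) (i1 t ! s))"
      using i1'(5) by simp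
    moreover have "equal_off s i0 i1'" using i1'(3) by (auto simp: equal_off_def)
    ultimately have "P i0 = P i1'"
      using less.hyps less.prems(1) i1'(1) same_qftp_over_sym[OF i1'(4)] by blast
    then show ?thesis using i1'(2) by simp
  next
    case equal
    then show ?thesis using P_eq_if_equal_coord less.prems(1-3) by blast
  qed
qed

lemma P_eq_if_same_qftp_over:
  assumes adm: "admissible i0" "admissible i1"
    and qf: "\<forall>s<length n. same_qftp_over r (\<lambda>t. i0 t ! s) (\<lambda>t. i1 t ! s) d (\<lambda>e. j e ! s)"
    and crit: "\<forall>s<length n. critical s \<subseteq> (\<lambda>e. j e ! s) ` {..<d}"
  shows "P i0 = P i1"
proof -
  define h where "h m t = map (\<lambda>s. if s < m then i1 t ! s else i0 t ! s) [0..<length n]" for m t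
  have adm_h: "admissible (h m)" for m
    using adm unfolding admissible_def idx_def h_def by auto
  have "P (h m) = P i0" if "m \<le> length n" for m
    using that
  proof (induction m)
    case 0
    have "h 0 t = i0 t" if "t < r" for t
      using adm(1) that by (auto simp: h_def admissible_length intro!: nth_equalityI)
    then show ?case by (intro P_cong) blast
  next
    case (Suc m)
    have "same_qftp_over r (\<lambda>t. h m t ! m) (\<lambda>t. h (Suc m) t ! m) d (\<lambda>e. j e ! m)"
      using qf Suc.prems by (simp add: h_def)
    moreover have "equal_off m (h m) (h (Suc m))" by (simp add: equal_off_def h_def)
    ultimately have "P (h m) = P (h (Suc m))"
      using P_eq_if_same_qftp_coord[of m "\<lambda>e. j e ! m" d] crit adm_h Suc.prems by simp
    then show ?case using Suc by simp
  qed
  moreover have "h (length n) t = i1 t" if "t < r" for t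
    using adm(2) that by (auto simp: h_def admissible_length intro!: nth_equalityI)
  ultimately show ?thesis using P_cong[of "h (length n)" i1] by auto
qed

end

definition blocks :: "nat \<Rightarrow> (nat \<Rightarrow> nat \<Rightarrow> nat list) \<Rightarrow> nat \<Rightarrow> nat list" where
  "blocks r w m = w (m div r) (m mod r)"

lemma div_mod_less_of_less_mult:
  assumes "m < N * r"
  shows "m div r < N" "m mod r < (r :: nat)"
proof -
  have "0 < r" using assms by (cases r) auto
  then show "m div r < N" "m mod r < r" using assms by (simp_all add: less_mult_imp_div_less)
qed

lemma blocks_index:
  assumes "m < N * r"
  obtains \<tau> \<rho> where "\<tau> < N" "\<rho> < r" "blocks r w m = w \<tau> \<rho>"
  using that div_mod_less_of_less_mult[OF assms] by (simp add: blocks_def)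

lemma blocks_mult_add: "\<rho> < r \<Longrightarrow> blocks r w (\<tau> * r + \<rho>) = w \<tau> \<rho>"
  by (simp add: blocks_def)

lemma same_qftp_refl: "same_qftp m u u"
  by (simp add: same_qftp_def same_qftp_over_def)

lemma same_qftp_Suc_on:
  assumes "\<forall>t<m. u' t = (if u t \<in> B then Suc (u t) else u t)" and "\<forall>t<m. \<forall>c\<in>B. u t \<noteq> Suc c"
  shows "same_qftp m u' u"
proof (rule same_qftp_if_strict_mono_on_values[where \<sigma> = "\<lambda>c. if c \<in> B then Suc c else c"])
  show "\<forall>t<m. u' t = (if u t \<in> B then Suc (u t) else u t)" by (rule assms(1))
  show "\<forall>t<m. \<forall>t'<m. u t < u t' \<longrightarrow>
      (if u t \<in> B then Suc (u t) else u t) < (if u t' \<in> B then Suc (u t') else u t')"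
  proof (intro allI impI)
    fix t t' assume "t < m" "t' < m" "u t < u t'"
    moreover have "u t' \<noteq> Suc (u t)" if "u t \<in> B" using assms(2) \<open>t' < m\<close> that by blast
    ultimately show "(if u t \<in> B then Suc (u t) else u t) < (if u t' \<in> B then Suc (u t') else u t')"
      by auto
  qed
qed

context index_tuple_property
begin

lemma blocks_in_idx:
  assumes "\<forall>\<tau><N. admissible (w \<tau>)" "m < N * r"
  shows "blocks r w m \<in> idx n"
proof -
  obtain \<tau> \<rho> where "\<tau> < N" "\<rho> < r" "blocks r w m = w \<tau> \<rho>"
    by (rule blocks_index[OF assms(2)])
  then show ?thesis using assms(1) by (simp add: admissible_def)
qed

lemma obtain_separated_witnesses:
  assumes s: "s < length n" and big: "(4 * r + 1) * N \<le> card (critical s)"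
  obtains p w where
    "\<forall>\<tau><N. Suc (p \<tau>) < n ! s \<and> admissible (w \<tau>) \<and> (\<forall>\<rho><r. w \<tau> \<rho> ! s \<noteq> Suc (p \<tau>)) \<and>
       P (shift_up s (p \<tau>) (w \<tau>)) \<noteq> P (w \<tau>)"
    "\<forall>\<tau><N. \<forall>\<tau>'<N. \<tau> \<noteq> \<tau>' \<longrightarrow> (\<forall>\<rho><r. w \<tau> \<rho> ! s \<noteq> p \<tau>' \<and> w \<tau> \<rho> ! s \<noteq> Suc (p \<tau>'))"
proof -
  have "\<forall>q\<in>critical s. \<exists>i. admissible i \<and> (\<forall>t<r. i t ! s \<noteq> Suc q) \<and> P (shift_up s q i) \<noteq> P i"
    by (auto simp: critical_def shift_invariant_def)
  then obtain wit where wit: "\<forall>q\<in>critical s. admissible (wit q) \<and> (\<forall>t<r. wit q t ! s \<noteq> Suc q) \<and>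
      P (shift_up s q (wit q)) \<noteq> P (wit q)"
    by (rule bchoice[THEN exE]) blast
  define W where "W q = (\<lambda>t. wit q t ! s) ` {..<r}" for q
  have "\<forall>q\<in>critical s. finite (W q) \<and> card (W q) \<le> r"
    unfolding W_def using card_image_le[of "{..<r}"] by auto
  then obtain Q where Q: "Q \<subseteq> critical s" "card Q = N"
    "\<forall>p\<in>Q. \<forall>q\<in>Q. p \<noteq> q \<longrightarrow> q \<notin> W p \<and> Suc q \<notin> W p"
    using exists_separated_subset[OF finite_critical big] by blast
  define p where "p \<tau> = sorted_list_of_set Q ! \<tau>" for \<tau>
  have "finite Q" using Q(1) finite_critical finite_subset by blast
  then have L: "length (sorted_list_of_set Q) = N" "distinct (sorted_list_of_set Q)"
    "set (sorted_list_of_set Q) = Q"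
    using Q(2) by simp_all
  have pQ: "p \<tau> \<in> Q" if "\<tau> < N" for \<tau>
    using L that nth_mem[of \<tau> "sorted_list_of_set Q"] by (simp add: p_def)
  have p_inj: "p \<tau> = p \<tau>' \<longleftrightarrow> \<tau> = \<tau>'" if "\<tau> < N" "\<tau>' < N" for \<tau> \<tau>'
    using L that by (simp add: p_def nth_eq_iff_index_eq)
  show ?thesis
  proof (rule that[of p "\<lambda>\<tau>. wit (p \<tau>)"])
    show "\<forall>\<tau><N. Suc (p \<tau>) < n ! s \<and> admissible (wit (p \<tau>)) \<and> (\<forall>\<rho><r. wit (p \<tau>) \<rho> ! s \<noteq> Suc (p \<tau>)) \<and>
       P (shift_up s (p \<tau>) (wit (p \<tau>))) \<noteq> P (wit (p \<tau>))"
      using pQ Q(1) wit by (auto simp: critical_def)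
    show "\<forall>\<tau><N. \<forall>\<tau>'<N. \<tau> \<noteq> \<tau>' \<longrightarrow>
        (\<forall>\<rho><r. wit (p \<tau>) \<rho> ! s \<noteq> p \<tau>' \<and> wit (p \<tau>) \<rho> ! s \<noteq> Suc (p \<tau>'))"
    proof (intro allI impI)
      fix \<tau> \<tau>' \<rho> assume "\<tau> < N" "\<tau>' < N" "\<tau> \<noteq> \<tau>'" "\<rho> < r"
      then have "p \<tau> \<noteq> p \<tau>'" using p_inj by simp
      then have "p \<tau>' \<notin> W (p \<tau>) \<and> Suc (p \<tau>') \<notin> W (p \<tau>)"
        using Q(3) pQ \<open>\<tau> < N\<close> \<open>\<tau>' < N\<close> by blast
      moreover have "wit (p \<tau>) \<rho> ! s \<in> W (p \<tau>)" using \<open>\<rho> < r\<close> by (simp add: W_def)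
      ultimately show "wit (p \<tau>) \<rho> ! s \<noteq> p \<tau>' \<and> wit (p \<tau>) \<rho> ! s \<noteq> Suc (p \<tau>')" by auto
    qed
  qed
qed

text \<open>Shifting the separated points p \<tau> of the blocks in X up by one is an order
  embedding of the values in coordinate s, because no other value sits at p \<tau> + 1.\<close>
lemma same_qftp_blocks_shift_up:
  assumes s: "s < length n" and adm: "\<forall>\<tau><N. admissible (w \<tau>)"
    and own: "\<forall>\<tau><N. \<forall>\<rho><r. w \<tau> \<rho> ! s \<noteq> Suc (p \<tau>)"
    and sep: "\<forall>\<tau><N. \<forall>\<tau>'<N. \<tau> \<noteq> \<tau>' \<longrightarrow> (\<forall>\<rho><r. w \<tau> \<rho> ! s \<noteq> p \<tau>' \<and> w \<tau> \<rho> ! s \<noteq> Suc (p \<tau>'))"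
    and "s' < length n"
  shows "same_qftp (N * r)
    (\<lambda>m. blocks r (\<lambda>\<tau>. if \<tau> \<in> X then shift_up s (p \<tau>) (w \<tau>) else w \<tau>) m ! s') (\<lambda>m. blocks r w m ! s')"
proof -
  let ?w' = "\<lambda>\<tau>. if \<tau> \<in> X then shift_up s (p \<tau>) (w \<tau>) else w \<tau>"
  have w'_nth: "?w' \<tau> \<rho> ! s' = (if s' = s \<and> \<tau> \<in> X then bump (p \<tau>) (w \<tau> \<rho> ! s) else w \<tau> \<rho> ! s')"
    if "\<tau> < N" "\<rho> < r" for \<tau> \<rho>
    using adm that \<open>s' < length n\<close> s by (auto simp: shift_up_nth admissible_length)
  show ?thesis
  proof (cases "s' = s")
    case False
    then have "blocks r ?w' m ! s' = blocks r w m ! s'" if "m < N * r" for m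
      using w'_nth div_mod_less_of_less_mult[OF that] by (simp add: blocks_def)
    then show ?thesis using same_qftp_refl[of "N * r" "\<lambda>m. blocks r w m ! s'"]
      by (simp add: same_qftp_def same_qftp_over_def)
  next
    case True
    let ?B = "p ` (X \<inter> {..<N})"
    have moved: "w \<tau> \<rho> ! s \<in> ?B \<longleftrightarrow> \<tau> \<in> X \<and> w \<tau> \<rho> ! s = p \<tau>"
      if "\<tau> < N" "\<rho> < r" for \<tau> \<rho>
    proof
      assume "w \<tau> \<rho> ! s \<in> ?B"
      then obtain \<tau>' where \<tau>': "\<tau>' \<in> X" "\<tau>' < N" "w \<tau> \<rho> ! s = p \<tau>'" by blast
      moreover have "\<tau>' = \<tau>"
      proof (rule ccontr)
        assume "\<tau>' \<noteq> \<tau>"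
        then show False using sep that \<tau>'(2,3) by simp
      qed
      ultimately show "\<tau> \<in> X \<and> w \<tau> \<rho> ! s = p \<tau>" by simp
    qed (use that in blast)
    have no_Suc: "w \<tau> \<rho> ! s \<noteq> Suc (p \<tau>')" if "\<tau> < N" "\<rho> < r" "\<tau>' < N" for \<tau> \<rho> \<tau>'
      using own sep that by (cases "\<tau> = \<tau>'") simp_all
    show ?thesis
    proof (rule same_qftp_Suc_on[where B = ?B])
      show "\<forall>m<N * r. blocks r ?w' m ! s' =
          (if blocks r w m ! s' \<in> ?B then Suc (blocks r w m ! s') else blocks r w m ! s')"
        using w'_nth moved div_mod_less_of_less_mult True by (simp add: blocks_def bump_def)
      show "\<forall>m<N * r. \<forall>c\<in>?B. blocks r w m ! s' \<noteq> Suc c"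
        using no_Suc div_mod_less_of_less_mult True by (auto simp: blocks_def)
    qed
  qed
qed

end

section \<open>Pattern formulas and shattering\<close>

text \<open>Suc (sum_list x) exceeds every variable of x, so the \<tau>-th copies of the other
  variables are fresh and disjoint from the copies for other \<tau>.\<close>
definition copy_var :: "nat list \<Rightarrow> nat \<Rightarrow> nat \<Rightarrow> nat" where
  "copy_var x \<tau> k = (if k \<in> set x then k else Suc (sum_list x) + prod_encode (\<tau>, k))"

lemma copy_var_in: "k \<in> set x \<Longrightarrow> copy_var x \<tau> k = k"
  by (simp add: copy_var_def)

lemma copy_var_notin:
  assumes "k \<notin> set x"
  shows "copy_var x \<tau> k \<notin> set x"
proof
  assume "copy_var x \<tau> k \<in> set x"
  then have "copy_var x \<tau> k \<le> sum_list x" by (simp add: member_le_sum_list)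
  then show False using assms by (simp add: copy_var_def)
qed

lemma copy_var_eq_iff:
  "k \<notin> set x \<Longrightarrow> k' \<notin> set x \<Longrightarrow> copy_var x \<tau> k = copy_var x \<tau>' k' \<longleftrightarrow> \<tau> = \<tau>' \<and> k = k'"
  by (auto simp: copy_var_def prod_encode_eq)

lemma inj_copy_var: "inj (copy_var x \<tau>)"
proof (rule injI)
  fix k k' assume eq: "copy_var x \<tau> k = copy_var x \<tau> k'"
  show "k = k'"
    using eq copy_var_eq_iff[of k x k' \<tau> \<tau>] copy_var_in copy_var_notin by metis
qed

definition copy_vars :: "nat list \<Rightarrow> nat list list \<Rightarrow> nat \<Rightarrow> nat list list" where
  "copy_vars x ys N = concat (map (\<lambda>\<tau>. map (map (copy_var x \<tau>)) ys) [0..<N])"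

definition pattern_fm :: "('f, 'p) fm \<Rightarrow> nat list \<Rightarrow> nat \<Rightarrow> nat set \<Rightarrow> ('f, 'p) fm" where
  "pattern_fm \<phi> x N S = Exs x (Conjs (map (\<lambda>\<tau>. if \<tau> \<in> S then rename (copy_var x \<tau>) \<phi>
     else Neg (rename (copy_var x \<tau>) \<phi>)) [0..<N]))"

definition pattern_Delta ::
  "('f, 'p) fm \<Rightarrow> nat list \<Rightarrow> nat list list \<Rightarrow> nat \<Rightarrow> (('f, 'p) fm \<times> nat list list) set" where
  "pattern_Delta \<phi> x ys N = (\<lambda>S. (pattern_fm \<phi> x N S, copy_vars x ys N)) ` Pow {..<N}"

lemma length_copy_vars: "length (copy_vars x ys N) = N * length ys"
  by (induction N) (auto simp: copy_vars_def)

lemma concat_copy_vars: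
  "concat (copy_vars x ys N) = concat (map (\<lambda>\<tau>. map (copy_var x \<tau>) (concat ys)) [0..<N])"
  unfolding copy_vars_def by (induction N) (auto simp: map_concat)

lemma set_concat_copy_vars:
  "set (concat (copy_vars x ys N)) = (\<Union>\<tau><N. copy_var x \<tau> ` set (concat ys))"
  unfolding concat_copy_vars by (simp add: atLeast0LessThan)

lemma distinct_copy_vars:
  assumes "distinct (x @ concat ys)"
  shows "distinct (concat (copy_vars x ys N))"
proof (induction N)
  case (Suc N)
  have "distinct (map (copy_var x N) (concat ys))"
    using assms inj_copy_var by (simp add: distinct_map inj_on_subset[OF _ subset_UNIV])
  moreover have "copy_var x \<tau> k \<noteq> copy_var x N k'"
    if "\<tau> < N" "k \<in> set (concat ys)" "k' \<in> set (concat ys)" for \<tau> k k'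
  proof -
    have "k \<notin> set x" "k' \<notin> set x" using assms that by auto
    then show ?thesis using copy_var_eq_iff that(1) by simp
  qed
  then have "set (concat (copy_vars x ys N)) \<inter> copy_var x N ` set (concat ys) = {}"
    unfolding set_concat_copy_vars by blast
  ultimately show ?case using Suc by (simp add: concat_copy_vars)
qed (simp add: copy_vars_def)

lemma wf_Delta_pattern_Delta:
  assumes "distinct (x @ concat ys)" "\<forall>y\<in>set ys. length y = len"
    and "fv \<phi> \<subseteq> set x \<union> (\<Union>y\<in>set ys. set y)"
  shows "wf_Delta len (pattern_Delta \<phi> x ys N)"
proof -
  have "fv (pattern_fm \<phi> x N S) \<subseteq> set (concat (copy_vars x ys N))" for S
  proof
    fix k assume "k \<in> fv (pattern_fm \<phi> x N S)"
    then obtain \<tau> k' where "\<tau> < N" "k' \<in> fv \<phi>" "k = copy_var x \<tau> k'" "k \<notin> set x"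
      using fv_rename by (fastforce simp: pattern_fm_def fv_Exs fv_Conjs split: if_splits)
    moreover from this have "k' \<in> set (concat ys)" using assms(3) copy_var_in by fastforce
    ultimately show "k \<in> set (concat (copy_vars x ys N))"
      unfolding set_concat_copy_vars by blast
  qed
  moreover have "\<forall>z\<in>set (copy_vars x ys N). length z = len"
    using assms(2) by (auto simp: copy_vars_def)
  ultimately show ?thesis
    using distinct_copy_vars[OF assms(1)] by (auto simp: wf_Delta_def pattern_Delta_def)
qed

definition shatters :: "('a, 'f, 'p) struc \<Rightarrow> ('f, 'p) fm \<Rightarrow> nat set \<Rightarrow> nat \<Rightarrow> bool" where
  "shatters M \<phi> U N \<longleftrightarrow> (\<exists>(a :: nat \<Rightarrow> nat \<Rightarrow> 'a) (b :: nat set \<Rightarrow> nat \<Rightarrow> 'a).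
      (\<forall>i. valuation M (a i)) \<and> (\<forall>S. valuation M (b S)) \<and>
      (\<forall>i<N. \<forall>S\<subseteq>{..<N}. sat M (\<lambda>k. if k \<in> U then b S k else a i k) \<phi> \<longleftrightarrow> i \<in> S))"

lemma nip_part_iff: "nip_part M \<phi> U \<longleftrightarrow> (\<exists>N. \<not> shatters M \<phi> U N)"
  by (simp add: nip_part_def shatters_def)

text \<open>The copies \<tau> < N of the parameter variables of \<phi>, evaluated under v, together with
  witnesses for x of all the pattern formulas form a shattered configuration.\<close>
lemma shatters_if_all_pattern_fm:
  assumes v: "valuation M v" and all: "\<forall>S\<subseteq>{..<N}. sat M v (pattern_fm \<phi> x N S)"
  shows "shatters M \<phi> (fv \<phi> \<inter> set x) N"
proof -
  define good where "good S v' \<longleftrightarrow> valuation M v' \<and> (\<forall>k. k \<notin> set x \<longrightarrow> v' k = v k) \<and>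
      (\<forall>\<tau><N. sat M (v' \<circ> copy_var x \<tau>) \<phi> = (\<tau> \<in> S))" for S v'
  have ex: "\<exists>v'. good S v'" if S: "S \<subseteq> {..<N}" for S
  proof -
    obtain v' where v': "valuation M v'" "\<forall>k. k \<notin> set x \<longrightarrow> v' k = v k"
      "sat M v' (Conjs (map (\<lambda>\<tau>. if \<tau> \<in> S then rename (copy_var x \<tau>) \<phi>
          else Neg (rename (copy_var x \<tau>) \<phi>)) [0..<N]))"
      using sat_ExsD[OF all[rule_format, OF S, unfolded pattern_fm_def] v] by blast
    have "\<forall>\<tau><N. sat M (v' \<circ> copy_var x \<tau>) \<phi> = (\<tau> \<in> S)"
    proof (intro allI impI)
      fix \<tau> assume "\<tau> < N"
      have "sat M v' (if \<tau> \<in> S then rename (copy_var x \<tau>) \<phi> else Neg (rename (copy_var x \<tau>) \<phi>))"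
        using v'(3) \<open>\<tau> < N\<close> unfolding sat_Conjs by auto
      then show "sat M (v' \<circ> copy_var x \<tau>) \<phi> = (\<tau> \<in> S)"
        by (auto simp: sat_rename[OF inj_copy_var] split: if_splits)
    qed
    then show ?thesis unfolding good_def by (intro exI[of _ v'] conjI) (use v' in simp_all)
  qed
  define b where "b S = (SOME v'. good (S \<inter> {..<N}) v')" for S
  have b: "good (S \<inter> {..<N}) (b S)" for S
    unfolding b_def by (rule someI_ex[OF ex[OF Int_lower2]])
  have "sat M (\<lambda>k. if k \<in> fv \<phi> \<inter> set x then b S k else (v \<circ> copy_var x i) k) \<phi> \<longleftrightarrow> i \<in> S"
    if "i < N" for i S
  proof -
    have "b S (copy_var x i k) = v (copy_var x i k)" if "k \<notin> set x" for k
      using b[of S] copy_var_notin[OF that] by (simp add: good_def)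
    then have "sat M (\<lambda>k. if k \<in> fv \<phi> \<inter> set x then b S k else (v \<circ> copy_var x i) k) \<phi> =
        sat M (b S \<circ> copy_var x i) \<phi>"
      by (intro sat_cong) (simp add: copy_var_in)
    then show ?thesis using b[of S] that by (simp add: good_def)
  qed
  moreover have "valuation M (v \<circ> copy_var x i)" for i using v by (simp add: valuation_def)
  moreover have "valuation M (b S)" for S using b by (simp add: good_def)
  ultimately show ?thesis
    unfolding shatters_def by (intro exI[of _ "\<lambda>i. v \<circ> copy_var x i"] exI[of _ b]) simp
qed

lemma map_upt_mult:
  "map g [0..<N * r] = concat (map (\<lambda>\<tau>. map (\<lambda>\<rho>. g (\<tau> * r + \<rho>)) [0..<r]) [0..<N])"
proof (induction N)
  case (Suc N)
  have "[0..<Suc N * r] = [0..<N * r] @ map (\<lambda>\<rho>. N * r + \<rho>) [0..<r]"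
    using upt_add_eq_append[of 0 "N * r" r] map_add_upt[of "N * r" r] by (simp add: add.commute)
  then show ?case using Suc by simp
qed simp

lemma length_concat_const: "\<forall>z\<in>set zs. length z = l \<Longrightarrow> length (concat zs) = length zs * l"
  by (induction zs) auto

lemma exists_idx_enumeration:
  assumes "\<forall>s<length n. 0 < n ! s"
    and "\<forall>s<length n. A s \<subseteq> {..<n ! s} \<and> card (A s) \<le> d"
  shows "\<exists>j. (\<forall>e<d. j e \<in> idx n) \<and> (\<forall>s<length n. A s \<subseteq> (\<lambda>e. j e ! s) ` {..<d})"
proof -
  define L where "L s = sorted_list_of_set (A s)" for s
  define j where "j e = map (\<lambda>s. if e < length (L s) then L s ! e else 0) [0..<length n]" for e
  have set_L: "set (L s) = A s" and length_L: "length (L s) \<le> d" if "s < length n" for s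
  proof -
    have "A s \<subseteq> {..<n ! s}" "card (A s) \<le> d" using assms(2) that by simp_all
    moreover have "finite (A s)" using finite_subset[OF \<open>A s \<subseteq> {..<n ! s}\<close>] by simp
    ultimately show "set (L s) = A s" "length (L s) \<le> d" by (simp_all add: L_def)
  qed
  have "j e \<in> idx n" for e
  proof -
    have "L s ! e < n ! s" if "s < length n" "e < length (L s)" for s
      using assms(2) set_L[OF that(1)] nth_mem[OF that(2)] that(1) by auto
    then show ?thesis using assms(1) by (simp add: idx_def j_def)
  qed
  moreover have "A s \<subseteq> (\<lambda>e. j e ! s) ` {..<d}" if s: "s < length n" for s
  proof
    fix c assume "c \<in> A s"
    then obtain e where "e < length (L s)" "c = L s ! e"
      using set_L[OF s] by (metis in_set_conv_nth)
    then show "c \<in> (\<lambda>e. j e ! s) ` {..<d}"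
      using s length_L[OF s] by (intro image_eqI[of _ _ e]) (simp_all add: j_def)
  qed
  ultimately show ?thesis by blast
qed

locale nip_array =
  fixes M :: "('a, 'f, 'p) struc" and \<phi> :: "('f, 'p) fm" and x :: "nat list"
    and ys :: "nat list list" and len :: nat and n :: "nat list" and a :: "nat list \<Rightarrow> 'a list"
    and b :: "'a list" and N :: nat
  assumes dom_nonempty: "dom M \<noteq> {}"
    and index_orders_nonempty: "\<forall>s<length n. 0 < n ! s"
    and distinct_vars: "distinct (x @ concat ys)"
    and length_ys: "\<forall>y\<in>set ys. length y = len"
    and fv_subset: "fv \<phi> \<subseteq> set x \<union> (\<Union>y\<in>set ys. set y)"
    and array_entries: "\<forall>i\<in>idx n. length (a i) = len \<and> set (a i) \<subseteq> dom M"
    and length_b: "length b = length x" and b_dom: "set b \<subseteq> dom M"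
    and indiscernible: "delta_indisc M (pattern_Delta \<phi> x ys N) n a"
    and not_shatters: "\<not> shatters M \<phi> (fv \<phi> \<inter> set x) N"
begin

definition phi_at :: "(nat \<Rightarrow> nat list) \<Rightarrow> bool" where
  "phi_at i \<longleftrightarrow> sat M (inst (dflt M) (x @ concat ys) (b @ concat (map (\<lambda>t. a (i t)) [0..<length ys]))) \<phi>"

sublocale index_tuple_property n "length ys" phi_at
proof
  fix i i' :: "nat \<Rightarrow> nat list" assume "\<forall>t<length ys. i t = i' t"
  then have "map (\<lambda>t. a (i t)) [0..<length ys] = map (\<lambda>t. a (i' t)) [0..<length ys]"
    by (intro map_cong) auto
  then show "phi_at i = phi_at i'" by (simp only: phi_at_def)
qed

definition pattern_val :: "(nat \<Rightarrow> nat list) \<Rightarrow> nat \<Rightarrow> 'a" where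
  "pattern_val D = inst (dflt M) (concat (copy_vars x ys N))
     (concat (map (\<lambda>t. a (D t)) [0..<length (copy_vars x ys N)]))"

lemma valuation_pattern_val:
  assumes "\<forall>m<N * length ys. D m \<in> idx n"
  shows "valuation M (pattern_val D)"
  unfolding pattern_val_def
  by (rule valuation_inst[OF valuation_dflt[OF dom_nonempty]])
    (use assms array_entries in \<open>auto simp: length_copy_vars\<close>)

lemma sat_pattern_fm_iff:
  assumes "S \<subseteq> {..<N}" and "\<forall>m<N * length ys. D m \<in> idx n \<and> D' m \<in> idx n"
    and "\<forall>s<length n. same_qftp (N * length ys) (\<lambda>m. D m ! s) (\<lambda>m. D' m ! s)"
  shows "sat M (pattern_val D) (pattern_fm \<phi> x N S) \<longleftrightarrow> sat M (pattern_val D') (pattern_fm \<phi> x N S)"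
proof -
  have "(pattern_fm \<phi> x N S, copy_vars x ys N) \<in> pattern_Delta \<phi> x ys N"
    using assms(1) by (auto simp: pattern_Delta_def)
  with indiscernible have "\<forall>i0 i1. (\<forall>t<length (copy_vars x ys N). i0 t \<in> idx n \<and> i1 t \<in> idx n) \<and>
      (\<forall>s<length n. same_qftp (length (copy_vars x ys N)) (\<lambda>t. i0 t ! s) (\<lambda>t. i1 t ! s)) \<longrightarrow>
      sat M (pattern_val i0) (pattern_fm \<phi> x N S) = sat M (pattern_val i1) (pattern_fm \<phi> x N S)"
    unfolding delta_indisc_def pattern_val_def by fast
  then show ?thesis using assms(2,3) by (simp add: length_copy_vars)
qed

lemma pattern_val_blocks:
  "pattern_val (blocks (length ys) w) = inst (dflt M)
     (concat (map (\<lambda>\<tau>. map (copy_var x \<tau>) (concat ys)) [0..<N]))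
     (concat (map (\<lambda>\<tau>. concat (map (\<lambda>\<rho>. a (w \<tau> \<rho>)) [0..<length ys])) [0..<N]))"
proof -
  have blk: "(\<lambda>\<tau>. map (\<lambda>\<rho>. a (blocks (length ys) w (\<tau> * length ys + \<rho>))) [0..<length ys]) =
      (\<lambda>\<tau>. map (\<lambda>\<rho>. a (w \<tau> \<rho>)) [0..<length ys])"
    by (intro ext map_cong) (simp_all add: blocks_mult_add)
  have concat_concat: "concat (concat xss) = concat (map concat xss)" for xss :: "'a list list list"
    by (induction xss) auto
  show ?thesis
    unfolding pattern_val_def length_copy_vars concat_copy_vars map_upt_mult blk concat_concat
    by (simp add: comp_def)
qed

lemma length_concat_tuple:
  assumes "admissible i"
  shows "length (concat (map (\<lambda>\<rho>. a (i \<rho>)) [0..<length ys])) = length (concat ys)"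
proof -
  have "\<forall>z\<in>set (map (\<lambda>\<rho>. a (i \<rho>)) [0..<length ys]). length z = len"
    using assms array_entries by (auto simp: admissible_def)
  then show ?thesis
    using length_concat_const[of _ len] length_ys by (metis length_map length_upt minus_nat.diff_0)
qed

lemma pattern_val_blocks_copy_var:
  assumes adm: "\<forall>\<tau><N. admissible (w \<tau>)" and "\<tau> < N" "\<kappa> < length (concat ys)"
  shows "pattern_val (blocks (length ys) w) (copy_var x \<tau> (concat ys ! \<kappa>)) =
    concat (map (\<lambda>\<rho>. a (w \<tau> \<rho>)) [0..<length ys]) ! \<kappa>"
proof -
  let ?A = "\<lambda>\<tau>. concat (map (\<lambda>\<rho>. a (w \<tau> \<rho>)) [0..<length ys])"
  let ?Z = "map (\<lambda>\<tau>. map (copy_var x \<tau>) (concat ys)) [0..<N]"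
  have "distinct (concat ?Z)"
    using distinct_copy_vars[OF distinct_vars] by (simp add: concat_copy_vars)
  moreover have "list_all2 (\<lambda>z c. length z = length c) ?Z (map ?A [0..<N])"
    using adm length_concat_tuple by (simp add: list_all2_conv_all_nth)
  ultimately have "inst (dflt M) (concat ?Z) (concat (map ?A [0..<N])) (?Z ! \<tau> ! \<kappa>) =
      map ?A [0..<N] ! \<tau> ! \<kappa>"
    by (rule inst_concat_nth) (use assms(2,3) in simp_all)
  then show ?thesis unfolding pattern_val_blocks using assms(2,3) by simp
qed

lemma sat_rename_copy_var:
  assumes adm: "\<forall>\<tau><N. admissible (w \<tau>)" and \<tau>: "\<tau> < N"
    and agree: "\<forall>k. k \<notin> set x \<longrightarrow> v k = pattern_val (blocks (length ys) w) k"
  shows "sat M v (rename (copy_var x \<tau>) \<phi>) \<longleftrightarrow>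
    sat M (inst (dflt M) (x @ concat ys) (map v x @ concat (map (\<lambda>\<rho>. a (w \<tau> \<rho>)) [0..<length ys]))) \<phi>"
proof -
  let ?A = "concat (map (\<lambda>\<rho>. a (w \<tau> \<rho>)) [0..<length ys])"
  have "sat M v (rename (copy_var x \<tau>) \<phi>) = sat M (v \<circ> copy_var x \<tau>) \<phi>"
    by (rule sat_rename[OF inj_copy_var])
  also have "\<dots> = sat M (inst (dflt M) (x @ concat ys) (map v x @ ?A)) \<phi>"
  proof (rule sat_cong, rule ballI)
    fix k assume "k \<in> fv \<phi>"
    then have "k \<in> set (x @ concat ys)" using fv_subset by auto
    then obtain \<kappa> where \<kappa>: "\<kappa> < length (x @ concat ys)" "k = (x @ concat ys) ! \<kappa>"
      by (metis in_set_conv_nth)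
    have "length (x @ concat ys) = length (map v x @ ?A)"
      using length_concat_tuple adm \<tau> by simp
    then have rhs: "inst (dflt M) (x @ concat ys) (map v x @ ?A) k = (map v x @ ?A) ! \<kappa>"
      unfolding \<kappa>(2) by (rule inst_nth[OF distinct_vars _ \<kappa>(1)])
    show "(v \<circ> copy_var x \<tau>) k = inst (dflt M) (x @ concat ys) (map v x @ ?A) k"
    proof (cases "\<kappa> < length x")
      case True
      then have "k = x ! \<kappa>" "k \<in> set x" using \<kappa>(2) by (simp_all add: nth_append)
      then show ?thesis using rhs True by (simp add: copy_var_in nth_append)
    next
      case False
      define \<kappa>' where "\<kappa>' = \<kappa> - length x"
      have k: "k = concat ys ! \<kappa>'" "\<kappa>' < length (concat ys)"
        using \<kappa> False by (simp_all add: nth_append \<kappa>'_def)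
      then have "k \<in> set (concat ys)" using nth_mem by metis
      then have "k \<notin> set x" using distinct_vars by auto
      then show ?thesis
        using agree copy_var_notin pattern_val_blocks_copy_var[OF adm \<tau> k(2)] rhs False k(1)
        by (simp add: nth_append \<kappa>'_def)
    qed
  qed
  finally show ?thesis .
qed

lemma sat_pattern_fm_blocks:
  assumes adm: "\<forall>\<tau><N. admissible (w \<tau>)" and pattern: "\<forall>\<tau><N. phi_at (w \<tau>) \<longleftrightarrow> \<tau> \<in> S"
  shows "sat M (pattern_val (blocks (length ys) w)) (pattern_fm \<phi> x N S)"
proof -
  define v where "v = inst (pattern_val (blocks (length ys) w)) x b"
  have dx: "distinct x" using distinct_vars by simp
  have v_nth: "v (x ! \<kappa>) = b ! \<kappa>" if "\<kappa> < length x" for \<kappa>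
    unfolding v_def by (rule inst_nth[OF dx]) (use that length_b in simp_all)
  then have "map v x = b" using length_b by (intro nth_equalityI) simp_all
  have agree: "\<forall>k. k \<notin> set x \<longrightarrow> v k = pattern_val (blocks (length ys) w) k"
    by (simp add: v_def inst_outside)
  have "\<forall>k\<in>set x. v k \<in> dom M"
    using v_nth length_b b_dom by (metis in_set_conv_nth nth_mem subsetD)
  moreover have "sat M v (rename (copy_var x \<tau>) \<phi>) \<longleftrightarrow> \<tau> \<in> S" if "\<tau> < N" for \<tau>
    using sat_rename_copy_var[OF adm that agree] \<open>map v x = b\<close> pattern that
    by (simp add: phi_at_def)
  then have "sat M v (Conjs (map (\<lambda>\<tau>. if \<tau> \<in> S then rename (copy_var x \<tau>) \<phi>
      else Neg (rename (copy_var x \<tau>) \<phi>)) [0..<N]))"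
    unfolding sat_Conjs by auto
  ultimately show ?thesis
    unfolding pattern_fm_def by (rule sat_ExsI[OF _ agree])
qed

lemma card_critical_less:
  assumes s: "s < length n"
  shows "card (critical s) < (4 * length ys + 1) * N"
proof (rule ccontr)
  assume "\<not> ?thesis"
  then have "(4 * length ys + 1) * N \<le> card (critical s)" by simp
  then obtain p w where
    wit: "\<forall>\<tau><N. Suc (p \<tau>) < n ! s \<and> admissible (w \<tau>) \<and> (\<forall>\<rho><length ys. w \<tau> \<rho> ! s \<noteq> Suc (p \<tau>)) \<and>
       phi_at (shift_up s (p \<tau>) (w \<tau>)) \<noteq> phi_at (w \<tau>)"
    and sep: "\<forall>\<tau><N. \<forall>\<tau>'<N. \<tau> \<noteq> \<tau>' \<longrightarrow>
       (\<forall>\<rho><length ys. w \<tau> \<rho> ! s \<noteq> p \<tau>' \<and> w \<tau> \<rho> ! s \<noteq> Suc (p \<tau>'))"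
    by (rule obtain_separated_witnesses[OF s])
  have adm: "\<forall>\<tau><N. admissible (w \<tau>)" using wit by blast
  define flip where "flip S = {\<tau>. phi_at (w \<tau>) \<noteq> (\<tau> \<in> S)}" for S
  define w' where "w' S = (\<lambda>\<tau>. if \<tau> \<in> flip S then shift_up s (p \<tau>) (w \<tau>) else w \<tau>)" for S
  have "sat M (pattern_val (blocks (length ys) w)) (pattern_fm \<phi> x N S)" if S: "S \<subseteq> {..<N}" for S
  proof -
    have adm': "\<forall>\<tau><N. admissible (w' S \<tau>)"
      using wit admissible_shift_up[OF _ s] by (simp add: w'_def)
    have "\<forall>\<tau><N. phi_at (w' S \<tau>) \<longleftrightarrow> \<tau> \<in> S"
      using wit by (auto simp: w'_def flip_def)
    then have "sat M (pattern_val (blocks (length ys) (w' S))) (pattern_fm \<phi> x N S)"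
      by (rule sat_pattern_fm_blocks[OF adm'])
    moreover have "\<forall>s'<length n. same_qftp (N * length ys)
        (\<lambda>m. blocks (length ys) (w' S) m ! s') (\<lambda>m. blocks (length ys) w m ! s')"
      using same_qftp_blocks_shift_up[OF s adm _ sep] wit by (simp add: w'_def)
    ultimately show ?thesis
      using sat_pattern_fm_iff[OF S] blocks_in_idx[OF adm] blocks_in_idx[OF adm'] by blast
  qed
  moreover have "valuation M (pattern_val (blocks (length ys) w))"
    by (rule valuation_pattern_val) (use blocks_in_idx[OF adm] in blast)
  ultimately have "shatters M \<phi> (fv \<phi> \<inter> set x) N"
    using shatters_if_all_pattern_fm by blast
  then show False using not_shatters by contradiction
qed


theorem exists_order_type_parameters:
  "\<exists>j. (\<forall>e<(4 * length ys + 1) * N. j e \<in> idx n) \<and>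
     (\<forall>i0 i1. admissible i0 \<and> admissible i1 \<and>
        (\<forall>s<length n. same_qftp_over (length ys) (\<lambda>t. i0 t ! s) (\<lambda>t. i1 t ! s)
           ((4 * length ys + 1) * N) (\<lambda>e. j e ! s)) \<longrightarrow> phi_at i0 = phi_at i1)"
proof -
  have "\<forall>s<length n. critical s \<subseteq> {..<n ! s} \<and> card (critical s) \<le> (4 * length ys + 1) * N"
    using critical_subset card_critical_less by (simp add: less_imp_le)
  then obtain j where "\<forall>e<(4 * length ys + 1) * N. j e \<in> idx n"
    "\<forall>s<length n. critical s \<subseteq> (\<lambda>e. j e ! s) ` {..<(4 * length ys + 1) * N}"
    using exists_idx_enumeration[OF index_orders_nonempty] by blast
  then show ?thesis using P_eq_if_same_qftp_over by blast
qed
end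

theorem lemma3p5:
  fixes T :: "('f, 'p) fm set"
    and M :: "('a, 'f, 'p) struc"
    and \<phi> :: "('f, 'p) fm"
    and x :: "nat list" and ys :: "nat list list" and len :: nat
  assumes "complete_theory TYPE('a) T"
    and "is_model M T"
    and "distinct (x @ concat ys)"
    and "\<forall>y\<in>set ys. length y = len"
    and "fv \<phi> \<subseteq> set x \<union> (\<Union>y\<in>set ys. set y)"
    and "nip M \<phi>"
  shows "\<exists>(d'::nat) (\<Delta> :: (('f, 'p) fm \<times> nat list list) set). wf_Delta len \<Delta> \<and>
    (\<forall>(n::nat list) (a :: nat list \<Rightarrow> 'a list) (b :: 'a list).
       (\<forall>s<length n. 0 < n ! s) \<and>
       (\<forall>i\<in>idx n. length (a i) = len \<and> set (a i) \<subseteq> dom M) \<and>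
       length b = length x \<and> set b \<subseteq> dom M \<and>
       delta_indisc M \<Delta> n a \<longrightarrow>
       (\<exists>j :: nat \<Rightarrow> nat list. (\<forall>e<d'. j e \<in> idx n) \<and>
          (\<forall>i0 i1 :: nat \<Rightarrow> nat list.
             (\<forall>t<length ys. i0 t \<in> idx n \<and> i1 t \<in> idx n) \<and>
             (\<forall>s<length n. same_qftp_over (length ys) (\<lambda>t. i0 t ! s) (\<lambda>t. i1 t ! s) d' (\<lambda>e. j e ! s)) \<longrightarrow>
             (sat M (inst (dflt M) (x @ concat ys) (b @ concat (map (\<lambda>t. a (i0 t)) [0..<length ys]))) \<phi>
              \<longleftrightarrow> sat M (inst (dflt M) (x @ concat ys) (b @ concat (map (\<lambda>t. a (i1 t)) [0..<length ys]))) \<phi>))))"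
proof -
  have "nip_part M \<phi> (fv \<phi> \<inter> set x)" using assms(6) by (simp add: nip_def)
  then obtain N where N: "\<not> shatters M \<phi> (fv \<phi> \<inter> set x) N" by (auto simp: nip_part_iff)
  have "dom M \<noteq> {}" using assms(2) by (simp add: is_model_def is_struc_def)
  show ?thesis
  proof (intro exI[of _ "(4 * length ys + 1) * N"] exI[of _ "pattern_Delta \<phi> x ys N"] conjI allI impI,
      goal_cases)
    case 1
    show ?case by (rule wf_Delta_pattern_Delta[OF assms(3-5)])
  next
    case (2 n a b)
    interpret nip_array M \<phi> x ys len n a b N
      using \<open>dom M \<noteq> {}\<close> assms(3-5) 2 N by unfold_locales auto
    obtain j where "\<forall>e<(4 * length ys + 1) * N. j e \<in> idx n"
      "\<forall>i0 i1. admissible i0 \<and> admissible i1 \<and>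
        (\<forall>s<length n. same_qftp_over (length ys) (\<lambda>t. i0 t ! s) (\<lambda>t. i1 t ! s)
           ((4 * length ys + 1) * N) (\<lambda>e. j e ! s)) \<longrightarrow> phi_at i0 = phi_at i1"
      using exists_order_type_parameters by blast
    then show ?case by (intro exI[of _ j]) (auto simp: admissible_def phi_at_def)
  qed
qed

end
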